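(* Let $a>0$, $b>0$, $q\in(0,1)$ and $t>1$. Then \[ a\gamma - b\ln(1-q) + a\psi(t) - b\psi_q(t) > 0 . \]
   Context: $\gamma$ denotes the Euler–Mascheroni constant and $\psi(t)=\Gamma'(t)/\Gamma(t)$ is the digamma function for $t>0$, where $\Gamma$ is Euler's Gamma function. For $q\in(0,1)$ and $t>0$, the $q$-Gamma function is $\Gamma_q(t)=(1-q)^{1-t}\prod_{n=1}^{\infty}\frac{1-q^n}{1-q^{t+n}}$, and $\psi_q(t)=\frac{d}{dt}\ln\Gamma_q(t)=\Gamma_q'(t)/\Gamma_q(t)$. *)

theory Defs
  imports "HOL-Analysis.Analysis"
begin

definition qGamma :: "real \<Rightarrow> real \<Rightarrow> real" where
  "qGamma q t = (1 - q) powr (1 - t) *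
     (\<Prod>n. (1 - q ^ Suc n) / (1 - q powr (t + real (Suc n))))"

definition qDigamma :: "real \<Rightarrow> real \<Rightarrow> real" where
  "qDigamma q t = deriv (\<lambda>s. ln (qGamma q s)) t"

end

theory Submission
  imports Defs
begin

text \<open>Since \<open>\<psi>(1) = -\<gamma>\<close> and \<open>\<psi>\<close> is strictly increasing, \<open>\<gamma> + \<psi>(t) > 0\<close> for \<open>t > 1\<close>.
  Taking logarithms in the product defining \<open>\<Gamma>\<^sub>q\<close> and differentiating termwise (the
  derivative series is dominated by a geometric series uniformly on \<open>t \<ge> 0\<close>) gives
  \<open>\<psi>\<^sub>q(t) = -ln(1-q) + \<Sum>n\<ge>1. q^(t+n) ln q / (1 - q^(t+n))\<close>, a sum of negative terms,
  so \<open>\<psi>\<^sub>q(t) < -ln(1-q)\<close>.\<close>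

lemma euler_mascheroni_plus_Digamma_pos:
  fixes t :: real
  assumes "t > 1"
  shows "euler_mascheroni + Digamma t > 0"
proof -
  have "Digamma (1::real) < Digamma t"
    using assms by (intro Digamma_real_strict_mono) auto
  thus ?thesis by simp
qed

text \<open>The logarithm of the \<open>(n+1)\<close>-st factor of the product in \<^const>\<open>qGamma\<close>, written as a
  difference so that no quotient has to be shown positive before differentiating.\<close>
definition ln_qGamma_term :: "real \<Rightarrow> nat \<Rightarrow> real \<Rightarrow> real" where
  "ln_qGamma_term q n s = ln (1 - q ^ Suc n) - ln (1 - q powr (s + real (Suc n)))"

definition ln_qGamma_term_deriv :: "real \<Rightarrow> nat \<Rightarrow> real \<Rightarrow> real" where
  "ln_qGamma_term_deriv q n s =
     ln q * q powr (s + real (Suc n)) / (1 - q powr (s + real (Suc n)))"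

context
  fixes q :: real
  assumes q0: "0 < q" and q1: "q < 1"
begin

lemma powr_Suc_less_one: "s \<ge> 0 \<Longrightarrow> q powr (s + real (Suc n)) < 1"
  using q0 q1 by (simp add: powr01_less_one)

lemma powr_Suc_le_power:
  assumes "s \<ge> 0"
  shows "q powr (s + real (Suc n)) \<le> q ^ Suc n"
proof -
  have "q powr (s + real (Suc n)) \<le> q powr real (Suc n)"
    using q0 q1 assms by (intro powr_mono') auto
  also have "\<dots> = q ^ Suc n"
    using q0 by (rule powr_realpow)
  finally show ?thesis .
qed

lemma ln_qGamma_term_0: "ln_qGamma_term q n 0 = 0"
  using powr_realpow[OF q0, of "Suc n"] by (simp add: ln_qGamma_term_def)

lemma has_real_derivative_ln_qGamma_term:
  assumes "s \<ge> 0"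
  shows "(ln_qGamma_term q n has_real_derivative ln_qGamma_term_deriv q n s) (at s within S)"
proof -
  have "ln_qGamma_term q n = (\<lambda>s. ln (1 - q ^ Suc n) - ln (1 - exp ((s + real (Suc n)) * ln q)))"
    using q0 by (simp add: fun_eq_iff ln_qGamma_term_def powr_def)
  moreover have "((\<lambda>s. ln (1 - q ^ Suc n) - ln (1 - exp ((s + real (Suc n)) * ln q)))
          has_real_derivative
        0 - (0 - exp ((s + real (Suc n)) * ln q) * ((1 + 0) * ln q))
            / (1 - exp ((s + real (Suc n)) * ln q))) (at s within S)"
    using powr_Suc_less_one[OF assms, of n] q0
    by (intro derivative_eq_intros) (auto simp: powr_def)
  ultimately show ?thesis
    using q0 by (simp add: ln_qGamma_term_deriv_def powr_def mult.commute)
qed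

lemma abs_ln_qGamma_term_deriv_le:
  assumes "s \<ge> 0"
  shows "\<bar>ln_qGamma_term_deriv q n s\<bar> \<le> - ln q / (1 - q) * q ^ Suc n"
proof -
  have pos: "0 < 1 - q powr (s + real (Suc n))"
    using powr_Suc_less_one[OF assms] by simp
  have "q ^ Suc n \<le> q"
    using q0 q1 by (simp add: mult_left_le power_le_one)
  hence "1 - q \<le> 1 - q powr (s + real (Suc n))"
    using powr_Suc_le_power[OF assms, of n] by linarith
  hence "q powr (s + real (Suc n)) / (1 - q powr (s + real (Suc n))) \<le> q ^ Suc n / (1 - q)"
    using q0 q1 powr_Suc_le_power[OF assms, of n] by (intro frac_le) auto
  hence "- ln q * (q powr (s + real (Suc n)) / (1 - q powr (s + real (Suc n))))
           \<le> - ln q * (q ^ Suc n / (1 - q))"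
    using q0 q1 by (intro mult_left_mono) auto
  thus ?thesis
    using pos q0 q1 by (simp add: ln_qGamma_term_deriv_def abs_mult abs_divide)
qed

lemma ln_qGamma_term_deriv_neg: "t \<ge> 0 \<Longrightarrow> ln_qGamma_term_deriv q n t < 0"
  using powr_Suc_less_one[of t n] q0 q1
  by (simp add: ln_qGamma_term_deriv_def mult_neg_pos divide_neg_pos)

lemma summable_ln_qGamma_term_deriv_bound: "summable (\<lambda>n. - ln q / (1 - q) * q ^ Suc n)"
  using q0 q1 by (intro summable_mult) (simp add: summable_geometric)

lemma ln_qGamma_series:
  assumes "t > 0"
  shows "summable (\<lambda>n. ln_qGamma_term q n t)"
    and "((\<lambda>s. \<Sum>n. ln_qGamma_term q n s) has_real_derivative
           (\<Sum>n. ln_qGamma_term_deriv q n t)) (at t)"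
proof -
  have unif: "uniformly_convergent_on {0..} (\<lambda>n s. \<Sum>i<n. ln_qGamma_term_deriv q i s)"
    by (rule Weierstrass_m_test'[OF _ summable_ln_qGamma_term_deriv_bound])
       (use abs_ln_qGamma_term_deriv_le in auto)
  note series = has_field_derivative_series'[OF convex_real_interval(1)
      has_real_derivative_ln_qGamma_term unif _ _ _, of 0]
  show "summable (\<lambda>n. ln_qGamma_term q n t)"
    using series(1)[of t] assms by (simp add: ln_qGamma_term_0)
  show "((\<lambda>s. \<Sum>n. ln_qGamma_term q n s) has_real_derivative
          (\<Sum>n. ln_qGamma_term_deriv q n t)) (at t)"
    using series(2)[of t] assms by (simp add: ln_qGamma_term_0)
qed

lemma ln_qGamma_eq:
  assumes "x > 0"
  shows "ln (qGamma q x) = (1 - x) * ln (1 - q) + (\<Sum>n. ln_qGamma_term q n x)"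
proof -
  have "(1 - q ^ Suc n) / (1 - q powr (x + real (Suc n))) = exp (ln_qGamma_term q n x)" for n
    using power_Suc_less_one[OF q0 q1, of n] powr_Suc_less_one[of x n] assms
    by (simp add: ln_qGamma_term_def exp_diff)
  hence "qGamma q x = (1 - q) powr (1 - x) * (\<Prod>n. exp (ln_qGamma_term q n x))"
    by (simp add: qGamma_def)
  also have "\<dots> = (1 - q) powr (1 - x) * exp (\<Sum>n. ln_qGamma_term q n x)"
    using prodinf_exp[OF ln_qGamma_series(1)[OF assms]] by simp
  finally show ?thesis
    using q1 by (simp add: ln_mult ln_powr)
qed

lemma qDigamma_eq_series:
  assumes "t > 0"
  shows "qDigamma q t = - ln (1 - q) + (\<Sum>n. ln_qGamma_term_deriv q n t)"
proof -
  have "((\<lambda>x. (1 - x) * ln (1 - q) + (\<Sum>n. ln_qGamma_term q n x)) has_real_derivative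
          - ln (1 - q) + (\<Sum>n. ln_qGamma_term_deriv q n t)) (at t)"
    using ln_qGamma_series(2)[OF assms] by (auto intro!: derivative_eq_intros)
  hence "((\<lambda>s. ln (qGamma q s)) has_real_derivative
          - ln (1 - q) + (\<Sum>n. ln_qGamma_term_deriv q n t)) (at t)"
    by (rule has_field_derivative_transform_within_open[where S = "{0<..}"])
       (use assms ln_qGamma_eq in auto)
  thus ?thesis
    unfolding qDigamma_def by (rule DERIV_imp_deriv)
qed

lemma qDigamma_less_neg_ln:
  assumes "t > 0"
  shows "qDigamma q t < - ln (1 - q)"
proof -
  have summable: "summable (\<lambda>n. ln_qGamma_term_deriv q n t)"
    using assms abs_ln_qGamma_term_deriv_le
    by (intro summable_comparison_test[OF _ summable_ln_qGamma_term_deriv_bound]) auto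
  have "(\<Sum>n. ln_qGamma_term_deriv q n t) < 0"
    using suminf_pos[OF summable_minus[OF summable]] suminf_minus[OF summable]
      ln_qGamma_term_deriv_neg assms by fastforce
  thus ?thesis
    using qDigamma_eq_series[OF assms] by simp
qed

end

theorem lemma3p3:
  fixes a b q t :: real
  assumes "a > 0" and "b > 0" and "0 < q" and "q < 1" and "t > 1"
  shows "a * euler_mascheroni - b * ln (1 - q) + a * Digamma t - b * qDigamma q t > 0"
proof -
  have "0 < a * (euler_mascheroni + Digamma t)"
    using assms euler_mascheroni_plus_Digamma_pos by simp
  moreover have "0 < b * (- ln (1 - q) - qDigamma q t)"
    using assms qDigamma_less_neg_ln[of q t] by simp
  ultimately show ?thesis
    by (simp add: algebra_simps)
qed

end
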